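(* Let $M$ be a centrally endo-AIP right $R$-module and $S=\mathrm{End}_R(M)$. If $S$ has finite right uniform dimension, then $S$ is a quasi-Baer ring.
   Context: For $N\le M$, $l_S(N)=\{\phi\in S:\phi(N)=0\}$. An ideal $I$ of $S$ is centrally s-unital if for every $a\in I$ there is $z\in I$ central in $S$ with $az=a$. $M$ is centrally endo-AIP if $l_S(N)$ is a centrally s-unital ideal of $S$ for every fully invariant submodule $N$ of $M$. $S$ has finite right uniform dimension if $S_S$ contains an essential submodule that is a direct sum of finitely many uniform submodules. A ring is quasi-Baer if the right annihilator of every ideal is generated, as a right ideal, by an idempotent. *)

theory Defs
  imports "HOL-Algebra.Ideal" "HOL-Algebra.FiniteProduct"
begin

text \<open>A right R-module: the underlying abelian group is the type 'm, the ring R is the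
type 'r, and act x r is the right scalar multiplication x r.\<close>

definition right_module :: "('m::ab_group_add \<Rightarrow> 'r::ring_1 \<Rightarrow> 'm) \<Rightarrow> bool" where
  "right_module act \<longleftrightarrow>
     (\<forall>x y r. act (x + y) r = act x r + act y r) \<and>
     (\<forall>x r s. act x (r + s) = act x r + act x s) \<and>
     (\<forall>x r s. act x (r * s) = act (act x r) s) \<and>
     (\<forall>x. act x 1 = x)"

definition End_set :: "('m::ab_group_add \<Rightarrow> 'r::ring_1 \<Rightarrow> 'm) \<Rightarrow> ('m \<Rightarrow> 'm) set" where
  "End_set act = {f. (\<forall>x y. f (x + y) = f x + f y) \<and> (\<forall>x r. f (act x r) = act (f x) r)}"

definition End_ring :: "('m::ab_group_add \<Rightarrow> 'r::ring_1 \<Rightarrow> 'm) \<Rightarrow> ('m \<Rightarrow> 'm) ring" where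
  "End_ring act = \<lparr>carrier = End_set act, monoid.mult = (\<lambda>f g. f \<circ> g), one = id,
                   zero = (\<lambda>x. 0), add = (\<lambda>f g x. f x + g x)\<rparr>"

definition submodule_of :: "('m::ab_group_add \<Rightarrow> 'r::ring_1 \<Rightarrow> 'm) \<Rightarrow> 'm set \<Rightarrow> bool" where
  "submodule_of act N \<longleftrightarrow> 0 \<in> N \<and> (\<forall>x\<in>N. \<forall>y\<in>N. x + y \<in> N) \<and> (\<forall>x\<in>N. - x \<in> N)
      \<and> (\<forall>x\<in>N. \<forall>r. act x r \<in> N)"

definition fully_invariant :: "('m::ab_group_add \<Rightarrow> 'r::ring_1 \<Rightarrow> 'm) \<Rightarrow> 'm set \<Rightarrow> bool" where
  "fully_invariant act N \<longleftrightarrow> submodule_of act N \<and> (\<forall>f\<in>End_set act. \<forall>x\<in>N. f x \<in> N)"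

definition l_ann :: "('m::ab_group_add \<Rightarrow> 'r::ring_1 \<Rightarrow> 'm) \<Rightarrow> 'm set \<Rightarrow> ('m \<Rightarrow> 'm) set" where
  "l_ann act N = {\<phi> \<in> End_set act. \<forall>x\<in>N. \<phi> x = 0}"

definition central :: "('a, 'b) ring_scheme \<Rightarrow> 'a \<Rightarrow> bool" where
  "central R z \<longleftrightarrow> z \<in> carrier R \<and> (\<forall>s\<in>carrier R. z \<otimes>\<^bsub>R\<^esub> s = s \<otimes>\<^bsub>R\<^esub> z)"

definition centrally_s_unital :: "('a, 'b) ring_scheme \<Rightarrow> 'a set \<Rightarrow> bool" where
  "centrally_s_unital R I \<longleftrightarrow> ideal I R \<and>
     (\<forall>a\<in>I. \<exists>z\<in>I. central R z \<and> a \<otimes>\<^bsub>R\<^esub> z = a)"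

definition centrally_endo_AIP :: "('m::ab_group_add \<Rightarrow> 'r::ring_1 \<Rightarrow> 'm) \<Rightarrow> bool" where
  "centrally_endo_AIP act \<longleftrightarrow>
     (\<forall>N. fully_invariant act N \<longrightarrow> centrally_s_unital (End_ring act) (l_ann act N))"

definition right_ideal :: "('a, 'b) ring_scheme \<Rightarrow> 'a set \<Rightarrow> bool" where
  "right_ideal R I \<longleftrightarrow> additive_subgroup I R \<and> (\<forall>a\<in>I. \<forall>s\<in>carrier R. a \<otimes>\<^bsub>R\<^esub> s \<in> I)"

definition essential_right_ideal :: "('a, 'b) ring_scheme \<Rightarrow> 'a set \<Rightarrow> bool" where
  "essential_right_ideal R K \<longleftrightarrow> right_ideal R K \<and>
     (\<forall>A. right_ideal R A \<and> A \<noteq> {\<zero>\<^bsub>R\<^esub>} \<longrightarrow> A \<inter> K \<noteq> {\<zero>\<^bsub>R\<^esub>})"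

definition uniform_right_ideal :: "('a, 'b) ring_scheme \<Rightarrow> 'a set \<Rightarrow> bool" where
  "uniform_right_ideal R U \<longleftrightarrow> right_ideal R U \<and> U \<noteq> {\<zero>\<^bsub>R\<^esub>} \<and>
     (\<forall>A B. right_ideal R A \<and> right_ideal R B \<and> A \<subseteq> U \<and> B \<subseteq> U \<and>
            A \<noteq> {\<zero>\<^bsub>R\<^esub>} \<and> B \<noteq> {\<zero>\<^bsub>R\<^esub>} \<longrightarrow> A \<inter> B \<noteq> {\<zero>\<^bsub>R\<^esub>})"

definition internal_sum :: "('a, 'b) ring_scheme \<Rightarrow> (nat \<Rightarrow> 'a set) \<Rightarrow> nat \<Rightarrow> 'a set" where
  "internal_sum R U n = {finsum R u {..<n} | u. u \<in> Pi {..<n} U}"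

definition independent_family :: "('a, 'b) ring_scheme \<Rightarrow> (nat \<Rightarrow> 'a set) \<Rightarrow> nat \<Rightarrow> bool" where
  "independent_family R U n \<longleftrightarrow>
     (\<forall>u \<in> Pi {..<n} U. finsum R u {..<n} = \<zero>\<^bsub>R\<^esub> \<longrightarrow> (\<forall>i<n. u i = \<zero>\<^bsub>R\<^esub>))"

definition finite_right_uniform_dimension :: "('a, 'b) ring_scheme \<Rightarrow> bool" where
  "finite_right_uniform_dimension R \<longleftrightarrow>
     (\<exists>n U. (\<forall>i<n. uniform_right_ideal R (U i)) \<and> independent_family R U n \<and>
            essential_right_ideal R (internal_sum R U n))"

definition r_ann :: "('a, 'b) ring_scheme \<Rightarrow> 'a set \<Rightarrow> 'a set" where
  "r_ann R I = {s \<in> carrier R. \<forall>a\<in>I. a \<otimes>\<^bsub>R\<^esub> s = \<zero>\<^bsub>R\<^esub>}"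

definition quasi_Baer :: "('a, 'b) ring_scheme \<Rightarrow> bool" where
  "quasi_Baer R \<longleftrightarrow>
     (\<forall>I. ideal I R \<longrightarrow>
        (\<exists>e\<in>carrier R. e \<otimes>\<^bsub>R\<^esub> e = e \<and> r_ann R I = {e \<otimes>\<^bsub>R\<^esub> s | s. s \<in> carrier R}))"

end

(* Let S = End(M). For an ideal I of S, the left annihilator L of r_S(I) equals l_S(N) for the
   fully invariant submodule N of elements killed by L, so L is centrally s-unital. Finite
   uniform dimension gives uniform right ideals U_1, ..., U_n with essential direct sum; pick a
   nonzero a_i in each U_i, inside L whenever U_i meets L, and a central z in L with a_i z = a_i
   for those a_i in L. A central d killing a nonzero element of every U_i is zero: B = l(dS)
   contains all a_i and is centrally s-unital, so it meets X = l(B), which contains d, only in 0;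
   uniformity gives X \<inter> U_i = 0, and as X is centrally s-unital, essentiality gives X = 0. Applied to
   d = w - wz for central w in L, this makes z a right identity of L, hence an idempotent with
   r_S(I) = (1 - z)S. *)

theory Submission
  imports Defs
begin

definition left_ann :: "('a, 'b) ring_scheme \<Rightarrow> 'a set \<Rightarrow> 'a set" where
  "left_ann R J = {x \<in> carrier R. \<forall>b\<in>J. x \<otimes>\<^bsub>R\<^esub> b = \<zero>\<^bsub>R\<^esub>}"

context ring
begin

lemma central_zero: "central R \<zero>"
  unfolding central_def by simp

lemma central_add: "central R a \<Longrightarrow> central R b \<Longrightarrow> central R (a \<oplus> b)"
  unfolding central_def by (simp add: l_distr r_distr)

lemma central_minus: "central R a \<Longrightarrow> central R b \<Longrightarrow> central R (a \<ominus> b)"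
  unfolding central_def by (simp add: minus_eq l_distr r_distr l_minus r_minus)

lemma central_mult: "central R a \<Longrightarrow> central R b \<Longrightarrow> central R (a \<otimes> b)"
  unfolding central_def by (metis m_assoc m_closed)

lemma centrally_s_unital_ideal: "centrally_s_unital R X \<Longrightarrow> ideal X R"
  unfolding centrally_s_unital_def by blast

lemma centrally_s_unital_unit:
  "centrally_s_unital R X \<Longrightarrow> a \<in> X \<Longrightarrow> \<exists>z\<in>X. central R z \<and> a \<otimes> z = a"
  unfolding centrally_s_unital_def by blast

lemma centrally_s_unital_common_unit:
  assumes cs: "centrally_s_unital R X" and "finite F" "F \<subseteq> X"
  shows "\<exists>z\<in>X. central R z \<and> (\<forall>a\<in>F. a \<otimes> z = a)"
  using assms(2,3)
proof (induction F rule: finite_induct)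
  case empty
  interpret X: ideal X R using cs by (rule centrally_s_unital_ideal)
  show ?case using central_zero X.zero_closed by blast
next
  case (insert a F)
  interpret X: ideal X R using cs by (rule centrally_s_unital_ideal)
  obtain z where z: "z \<in> X" "central R z" "\<forall>b\<in>F. b \<otimes> z = b"
    using insert by auto
  have a: "a \<in> X" "a \<in> carrier R" using insert X.Icarr by auto
  have zc: "z \<in> carrier R" using z(1) X.Icarr by auto
  have "a \<ominus> a \<otimes> z \<in> X"
    unfolding minus_eq using a z(1) zc by (simp add: X.I_l_closed X.I_r_closed)
  then obtain w where w: "w \<in> X" "central R w" "(a \<ominus> a \<otimes> z) \<otimes> w = a \<ominus> a \<otimes> z"
    using centrally_s_unital_unit[OF cs] by blast
  have wc: "w \<in> carrier R" using w(1) X.Icarr by auto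
  let ?u = "z \<oplus> (w \<ominus> z \<otimes> w)"
  have unit_expand: "b \<otimes> ?u = b \<otimes> z \<oplus> (b \<ominus> b \<otimes> z) \<otimes> w" if "b \<in> carrier R" for b
    using that zc wc by algebra
  have "?u \<in> X"
    unfolding minus_eq using z(1) w(1) zc wc by (simp add: X.I_l_closed)
  moreover have "central R ?u"
    using z(2) w(2) by (simp add: central_add central_minus central_mult)
  moreover have "a \<otimes> ?u = a"
  proof -
    have "a \<otimes> ?u = a \<otimes> z \<oplus> (a \<ominus> a \<otimes> z)" using unit_expand a(2) w(3) by simp
    also have "\<dots> = a" using a(2) zc by algebra
    finally show ?thesis .
  qed
  moreover have "b \<otimes> ?u = b" if "b \<in> F" for b
    using that unit_expand z(3) insert.prems X.Icarr wc by (auto simp: minus_eq r_neg)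
  ultimately show ?case by blast
qed

lemma right_ideal_Int:
  "right_ideal R A \<Longrightarrow> right_ideal R B \<Longrightarrow> right_ideal R (A \<inter> B)"
  unfolding right_ideal_def additive_subgroup_def by (simp add: add.subgroups_Inter_pair)

lemma right_ideal_zero: "right_ideal R A \<Longrightarrow> \<zero> \<in> A"
  unfolding right_ideal_def by (simp add: additive_subgroup.zero_closed)

lemma right_ideal_subset: "right_ideal R A \<Longrightarrow> A \<subseteq> carrier R"
  unfolding right_ideal_def by (simp add: additive_subgroup.a_subset)

lemma right_ideal_r_closed: "right_ideal R A \<Longrightarrow> a \<in> A \<Longrightarrow> s \<in> carrier R \<Longrightarrow> a \<otimes> s \<in> A"
  unfolding right_ideal_def by blast

lemma uniform_imp_right_ideal: "uniform_right_ideal R U \<Longrightarrow> right_ideal R U"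
  unfolding uniform_right_ideal_def by blast

lemma ideal_imp_right_ideal: "ideal I R \<Longrightarrow> right_ideal R I"
  unfolding right_ideal_def by (simp add: ideal.axioms(1) ideal.I_r_closed)

lemma ideal_central_principal:
  assumes "central R d"
  shows "ideal {d \<otimes> s | s. s \<in> carrier R} R"
proof (rule idealI)
  have d: "d \<in> carrier R" and comm: "\<And>s. s \<in> carrier R \<Longrightarrow> s \<otimes> d = d \<otimes> s"
    using assms unfolding central_def by auto
  show "subgroup {d \<otimes> s | s. s \<in> carrier R} (add_monoid R)"
  proof (rule add.subgroupI)
    fix x assume "x \<in> {d \<otimes> s | s. s \<in> carrier R}"
    then obtain s where "s \<in> carrier R" "x = d \<otimes> s" by blast
    then have "\<ominus> x = d \<otimes> (\<ominus> s)"
      using d by (simp add: r_minus)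
    then show "\<ominus> x \<in> {d \<otimes> s | s. s \<in> carrier R}"
      using \<open>s \<in> carrier R\<close> by auto
  next
    fix x y assume "x \<in> {d \<otimes> s | s. s \<in> carrier R}" "y \<in> {d \<otimes> s | s. s \<in> carrier R}"
    then obtain s t where "s \<in> carrier R" "t \<in> carrier R" "x = d \<otimes> s" "y = d \<otimes> t"
      by blast
    then have "x \<oplus> y = d \<otimes> (s \<oplus> t)"
      using d by (simp add: r_distr)
    then show "x \<oplus> y \<in> {d \<otimes> s | s. s \<in> carrier R}"
      using \<open>s \<in> carrier R\<close> \<open>t \<in> carrier R\<close> by auto
  qed (use d in auto)
  fix a x assume "a \<in> {d \<otimes> s | s. s \<in> carrier R}" "x \<in> carrier R"
  then obtain s where s: "s \<in> carrier R" "a = d \<otimes> s" by blast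
  have "x \<otimes> a = d \<otimes> (x \<otimes> s)" and "a \<otimes> x = d \<otimes> (s \<otimes> x)"
    using s d \<open>x \<in> carrier R\<close> comm by (simp_all flip: m_assoc)
  then show "x \<otimes> a \<in> {d \<otimes> s | s. s \<in> carrier R}" and "a \<otimes> x \<in> {d \<otimes> s | s. s \<in> carrier R}"
    using s \<open>x \<in> carrier R\<close> by auto
qed (rule ring_axioms)

lemma ideal_r_ann:
  assumes "ideal I R"
  shows "ideal (r_ann R I) R"
proof (rule idealI)
  interpret I: ideal I R by fact
  show "subgroup (r_ann R I) (add_monoid R)"
    by (rule add.subgroupI)
      (use I.Icarr in \<open>auto simp: r_ann_def r_minus r_distr\<close>)
  show "x \<otimes> a \<in> r_ann R I" "a \<otimes> x \<in> r_ann R I" if "a \<in> r_ann R I" "x \<in> carrier R" for a x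
    using that I.Icarr I.I_r_closed unfolding r_ann_def by (auto simp flip: m_assoc)
qed (rule ring_axioms)

lemma centrally_s_unital_Int_left_ann:
  assumes "centrally_s_unital R B"
  shows "B \<inter> left_ann R B \<subseteq> {\<zero>}"
  using centrally_s_unital_unit[OF assms] unfolding left_ann_def by fastforce

lemma uniform_right_ideal_Int_zero:
  assumes U: "uniform_right_ideal R U"
    and A: "right_ideal R A" and B: "right_ideal R B"
    and AB: "A \<inter> B \<subseteq> {\<zero>}" and BU: "\<not> B \<inter> U \<subseteq> {\<zero>}"
  shows "A \<inter> U \<subseteq> {\<zero>}"
proof (rule ccontr)
  assume AU: "\<not> A \<inter> U \<subseteq> {\<zero>}"
  have "right_ideal R (A \<inter> U)" "right_ideal R (B \<inter> U)"
    using U A B right_ideal_Int unfolding uniform_right_ideal_def by auto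
  then have "A \<inter> U \<inter> (B \<inter> U) \<noteq> {\<zero>}"
    using U AU BU unfolding uniform_right_ideal_def by blast
  moreover have "\<zero> \<in> A \<inter> U \<inter> (B \<inter> U)"
    using A B U right_ideal_zero unfolding uniform_right_ideal_def by blast
  ultimately show False using AB by blast
qed

lemma centrally_s_unital_zero_if_Int_summands_zero:
  assumes cs: "centrally_s_unital R X"
    and E: "essential_right_ideal R (internal_sum R U n)"
    and U: "\<forall>i<n. right_ideal R (U i)"
    and XU: "\<forall>i<n. X \<inter> U i \<subseteq> {\<zero>}"
  shows "X \<subseteq> {\<zero>}"
proof -
  interpret X: ideal X R using cs by (rule centrally_s_unital_ideal)
  have "x = \<zero>" if x: "x \<in> X" "x \<in> internal_sum R U n" for x
  proof -
    obtain u where u: "u \<in> Pi {..<n} U" "x = finsum R u {..<n}"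
      using x(2) unfolding internal_sum_def by auto
    have uc: "u \<in> {..<n} \<rightarrow> carrier R"
      using u(1) U right_ideal_subset by blast
    obtain w where w: "w \<in> X" "central R w" "x \<otimes> w = x"
      using centrally_s_unital_unit[OF cs x(1)] by blast
    have wc: "w \<in> carrier R" using w(1) X.Icarr by auto
    have "u i \<otimes> w \<in> X \<inter> U i" if "i < n" for i
      using that u(1) uc wc U X.I_l_closed[OF w(1)] right_ideal_r_closed[of "U i" "u i" w] by auto
    then have "u i \<otimes> w = \<zero>" if "i < n" for i
      using that XU by blast
    then have "(\<Oplus>i\<in>{..<n}. u i \<otimes> w) = (\<Oplus>i\<in>{..<n}. \<zero>)"
      by (intro finsum_cong') auto
    then have "x \<otimes> w = \<zero>"
      using u(2) finsum_ldistr[OF _ wc uc] finsum_zero by simp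
    then show ?thesis using w(3) by simp
  qed
  moreover have "\<zero> \<in> X \<inter> internal_sum R U n"
    using E unfolding essential_right_ideal_def by (auto intro: right_ideal_zero)
  ultimately have "X \<inter> internal_sum R U n = {\<zero>}" by blast
  then show ?thesis
    using E ideal_imp_right_ideal[OF X.ideal_axioms] unfolding essential_right_ideal_def by blast
qed

lemma central_eq_zero_if_annihilates_uniforms:
  assumes H: "\<And>J. ideal J R \<Longrightarrow> centrally_s_unital R (left_ann R J)"
    and U: "\<forall>i<n. uniform_right_ideal R (U i)"
    and E: "essential_right_ideal R (internal_sum R U n)"
    and d: "central R d"
    and ann: "\<forall>i<n. \<exists>a\<in>U i. a \<noteq> \<zero> \<and> d \<otimes> a = \<zero>"
  shows "d = \<zero>"
proof -
  have dc: "d \<in> carrier R" and comm: "\<And>s. s \<in> carrier R \<Longrightarrow> d \<otimes> s = s \<otimes> d"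
    using d unfolding central_def by auto
  define B where "B = left_ann R {d \<otimes> s | s. s \<in> carrier R}"
  have csB: "centrally_s_unital R B"
    unfolding B_def using H ideal_central_principal[OF d] .
  interpret B: ideal B R using csB by (rule centrally_s_unital_ideal)
  define X where "X = left_ann R B"
  have csX: "centrally_s_unital R X"
    unfolding X_def using H B.ideal_axioms .
  interpret X: ideal X R using csX by (rule centrally_s_unital_ideal)
  have XB: "X \<inter> B \<subseteq> {\<zero>}"
    unfolding X_def using centrally_s_unital_Int_left_ann[OF csB] by blast
  have "d \<otimes> b = \<zero>" if "b \<in> B" for b
  proof -
    have "b \<otimes> (d \<otimes> \<one>) = \<zero>" using that dc unfolding B_def left_ann_def by blast
    then show ?thesis using that B.Icarr dc comm by simp
  qed
  then have dX: "d \<in> X" unfolding X_def left_ann_def using dc by blast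
  have "X \<inter> U i \<subseteq> {\<zero>}" if i: "i < n" for i
  proof -
    obtain a where a: "a \<in> U i" "a \<noteq> \<zero>" "d \<otimes> a = \<zero>" using ann i by blast
    have ac: "a \<in> carrier R"
      using a(1) U i right_ideal_subset[OF uniform_imp_right_ideal] by blast
    have "a \<otimes> (d \<otimes> s) = \<zero>" if "s \<in> carrier R" for s
      using that a(3) ac dc comm[OF ac] by (simp flip: m_assoc)
    then have "a \<in> B" unfolding B_def left_ann_def using ac by blast
    then have "\<not> B \<inter> U i \<subseteq> {\<zero>}" using a by blast
    then show ?thesis
      using uniform_right_ideal_Int_zero XB U i
        ideal_imp_right_ideal[OF X.ideal_axioms] ideal_imp_right_ideal[OF B.ideal_axioms]
      by simp
  qed
  then have "X \<subseteq> {\<zero>}"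
    using centrally_s_unital_zero_if_Int_summands_zero[OF csX E] U uniform_imp_right_ideal
    by simp
  then show ?thesis using dX by blast
qed

lemma centrally_s_unital_has_right_identity:
  assumes H: "\<And>J. ideal J R \<Longrightarrow> centrally_s_unital R (left_ann R J)"
    and fud: "finite_right_uniform_dimension R"
    and cs: "centrally_s_unital R L"
  shows "\<exists>z\<in>L. \<forall>y\<in>L. y \<otimes> z = y"
proof -
  interpret L: ideal L R using cs by (rule centrally_s_unital_ideal)
  obtain n U where U: "\<forall>i<n. uniform_right_ideal R (U i)"
    and E: "essential_right_ideal R (internal_sum R U n)"
    using fud unfolding finite_right_uniform_dimension_def by blast
  have Ur: "\<forall>i<n. right_ideal R (U i)" using U uniform_imp_right_ideal by blast
  have "\<exists>a\<in>U i. a \<noteq> \<zero> \<and> (U i \<inter> L \<subseteq> {\<zero>} \<or> a \<in> L)" if "i < n" for i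
  proof -
    have "U i \<noteq> {\<zero>}" "\<zero> \<in> U i"
      using U that right_ideal_zero[OF uniform_imp_right_ideal] unfolding uniform_right_ideal_def
      by auto
    then show ?thesis by blast
  qed
  then obtain a where a: "\<forall>i<n. a i \<in> U i \<and> a i \<noteq> \<zero> \<and> (U i \<inter> L \<subseteq> {\<zero>} \<or> a i \<in> L)"
    by metis
  have ac: "a i \<in> carrier R" if "i < n" for i using a Ur right_ideal_subset that by blast
  obtain z where z: "z \<in> L" "central R z" and za: "\<forall>i<n. a i \<in> L \<longrightarrow> a i \<otimes> z = a i"
    using centrally_s_unital_common_unit[OF cs, of "a ` {i. i < n \<and> a i \<in> L}"] by auto
  have zc: "z \<in> carrier R" using z(1) L.Icarr by auto
  \<comment> \<open>\<open>z\<close> fixes all central elements of \<open>L\<close>, because \<open>w \<ominus> w \<otimes> z\<close> kills a nonzero element of every \<open>U i\<close>\<close>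
  have central_fixed: "w \<otimes> z = w" if w: "w \<in> L" "central R w" for w
  proof -
    have wc: "w \<in> carrier R" using w(1) L.Icarr by auto
    define d where "d = w \<ominus> w \<otimes> z"
    have dL: "d \<in> L" unfolding d_def minus_eq using w(1) zc wc by (simp add: L.I_r_closed)
    have d: "central R d" unfolding d_def using w(2) z(2) by (simp add: central_minus central_mult)
    then have dc: "d \<in> carrier R" and comm: "\<And>s. s \<in> carrier R \<Longrightarrow> d \<otimes> s = s \<otimes> d"
      unfolding central_def by auto
    have "d \<otimes> a i = \<zero>" if i: "i < n" for i
    proof (cases "a i \<in> L")
      case True
      have "z \<otimes> w = w \<otimes> z" using z(2) wc unfolding central_def by blast
      then have "a i \<otimes> d = (a i \<otimes> w) \<ominus> (a i \<otimes> z) \<otimes> w"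
        unfolding d_def using ac[OF i] wc zc by (simp add: r_distr minus_eq r_minus m_assoc)
      then show ?thesis using za True i ac[OF i] wc comm by (simp add: minus_eq r_neg)
    next
      case False
      then have "U i \<inter> L \<subseteq> {\<zero>}" using a i by blast
      moreover have "a i \<otimes> d \<in> U i \<inter> L"
        using a Ur i dL ac[OF i] dc right_ideal_r_closed by (auto intro: L.I_l_closed)
      ultimately show ?thesis using comm[OF ac[OF i]] by auto
    qed
    then have "d = \<zero>"
      using central_eq_zero_if_annihilates_uniforms[OF H U E d] a by blast
    moreover have "w = w \<otimes> z \<oplus> d"
      unfolding d_def using wc zc by algebra
    ultimately show ?thesis using wc zc by simp
  qed
  have "y \<otimes> z = y" if y: "y \<in> L" for y
  proof -
    obtain w where w: "w \<in> L" "central R w" "y \<otimes> w = y"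
      using centrally_s_unital_unit[OF cs y] by blast
    have "y \<otimes> z = y \<otimes> (w \<otimes> z)" using w(3) y L.Icarr w(1) zc by (simp flip: m_assoc)
    then show ?thesis using central_fixed[OF w(1,2)] w(3) by simp
  qed
  then show ?thesis using z(1) by blast
qed

lemma quasi_BaerI:
  assumes "\<And>I. ideal I R \<Longrightarrow> \<exists>z\<in>left_ann R (r_ann R I). \<forall>y\<in>left_ann R (r_ann R I). y \<otimes> z = y"
  shows "quasi_Baer R"
  unfolding quasi_Baer_def
proof (intro allI impI)
  fix I assume I: "ideal I R"
  interpret I: ideal I R by fact
  obtain z where z: "z \<in> left_ann R (r_ann R I)"
    and unit: "\<forall>y\<in>left_ann R (r_ann R I). y \<otimes> z = y"
    using assms[OF I] by blast
  have zc: "z \<in> carrier R" using z unfolding left_ann_def by blast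
  have zz: "z \<otimes> z = z" using unit z by blast
  have I_unit: "b \<otimes> z = b" if "b \<in> I" for b
    using unit that I.Icarr unfolding left_ann_def r_ann_def by blast
  define e where "e = \<one> \<ominus> z"
  have ec: "e \<in> carrier R" unfolding e_def using zc by simp
  have "z \<otimes> e = z \<ominus> z \<otimes> z" unfolding e_def using zc by (simp add: minus_eq r_distr r_minus)
  then have "z \<otimes> e = \<zero>" using zz zc by (simp add: minus_eq r_neg)
  moreover have "e \<otimes> e = e \<ominus> z \<otimes> e" unfolding e_def using zc by algebra
  ultimately have ee: "e \<otimes> e = e" using ec by (simp add: minus_eq)
  have "r_ann R I = {e \<otimes> s | s. s \<in> carrier R}"
  proof (intro equalityI subsetI)
    fix k assume k: "k \<in> r_ann R I"
    then have kc: "k \<in> carrier R" unfolding r_ann_def by blast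
    have "z \<otimes> k = \<zero>" using z k unfolding left_ann_def by blast
    moreover have "e \<otimes> k = k \<ominus> z \<otimes> k" unfolding e_def using zc kc by algebra
    ultimately have "k = e \<otimes> k" using kc by (simp add: minus_eq)
    then show "k \<in> {e \<otimes> s | s. s \<in> carrier R}" using kc by blast
  next
    fix x assume "x \<in> {e \<otimes> s | s. s \<in> carrier R}"
    then obtain s where s: "s \<in> carrier R" "x = e \<otimes> s" by blast
    have "b \<otimes> x = \<zero>" if b: "b \<in> I" for b
    proof -
      have bc: "b \<in> carrier R" using b I.Icarr by blast
      have "b \<otimes> e = b \<ominus> b \<otimes> z" unfolding e_def using bc zc by (simp add: minus_eq r_distr r_minus)
      then have "b \<otimes> e = \<zero>" using I_unit[OF b] bc by (simp add: minus_eq r_neg)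
      then show ?thesis using s bc ec by (simp flip: m_assoc)
    qed
    then show "x \<in> r_ann R I" unfolding r_ann_def using s ec by blast
  qed
  then show "\<exists>e\<in>carrier R. e \<otimes> e = e \<and> r_ann R I = {e \<otimes> s | s. s \<in> carrier R}"
    using ec ee by blast
qed

lemma quasi_Baer_if_left_ann_centrally_s_unital:
  assumes H: "\<And>J. ideal J R \<Longrightarrow> centrally_s_unital R (left_ann R J)"
    and fud: "finite_right_uniform_dimension R"
  shows "quasi_Baer R"
proof (rule quasi_BaerI)
  fix I assume "ideal I R"
  then have "centrally_s_unital R (left_ann R (r_ann R I))" by (intro H ideal_r_ann)
  then show "\<exists>z\<in>left_ann R (r_ann R I). \<forall>y\<in>left_ann R (r_ann R I). y \<otimes> z = y"
    using centrally_s_unital_has_right_identity[OF H fud] by blast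
qed

end

lemma additive_map_zero:
  fixes f :: "'a::ab_group_add \<Rightarrow> 'b::ab_group_add"
  assumes "\<And>x y. f (x + y) = f x + f y"
  shows "f 0 = 0"
  using assms[of 0 0] by simp

lemma additive_map_minus:
  fixes f :: "'a::ab_group_add \<Rightarrow> 'b::ab_group_add"
  assumes "\<And>x y. f (x + y) = f x + f y"
  shows "f (- x) = - f x"
  using assms[of x "- x"] additive_map_zero[OF assms] by (simp add: add_eq_0_iff)

lemma End_ring_simps [simp]:
  "carrier (End_ring act) = End_set act"
  "f \<otimes>\<^bsub>End_ring act\<^esub> g = f \<circ> g"
  "f \<oplus>\<^bsub>End_ring act\<^esub> g = (\<lambda>x. f x + g x)"
  "\<one>\<^bsub>End_ring act\<^esub> = id"
  "\<zero>\<^bsub>End_ring act\<^esub> = (\<lambda>x. 0)"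
  unfolding End_ring_def by simp_all

lemma End_set_comp: "f \<in> End_set act \<Longrightarrow> g \<in> End_set act \<Longrightarrow> f \<circ> g \<in> End_set act"
  unfolding End_set_def by simp

lemma ring_End_ring:
  assumes m: "right_module act"
  shows "ring (End_ring act)"
proof (rule ringI)
  have act_add: "act (x + y) r = act x r + act y r" for x y r
    using m unfolding right_module_def by blast
  have add_closed: "(\<lambda>x. f x + g x) \<in> End_set act" if "f \<in> End_set act" "g \<in> End_set act" for f g
    using that unfolding End_set_def by (auto simp: act_add add_ac)
  have zero_closed: "(\<lambda>x. 0) \<in> End_set act"
    unfolding End_set_def using additive_map_zero[of "\<lambda>x. act x r" for r] act_add by simp
  have neg_closed: "(\<lambda>x. - f x) \<in> End_set act" if "f \<in> End_set act" for f
    using that additive_map_minus[of "\<lambda>x. act x r" for r] act_add unfolding End_set_def by auto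
  show "abelian_group (End_ring act)"
  proof (rule abelian_groupI)
    show "\<exists>y\<in>carrier (End_ring act). y \<oplus>\<^bsub>End_ring act\<^esub> f = \<zero>\<^bsub>End_ring act\<^esub>"
      if "f \<in> carrier (End_ring act)" for f
      using that neg_closed by (auto intro!: bexI[of _ "\<lambda>x. - f x"])
  qed (auto simp: add_closed zero_closed add_ac)
  show "monoid (End_ring act)"
    by (rule monoidI) (auto simp: End_set_comp, simp add: End_set_def)
  show "(f \<oplus>\<^bsub>End_ring act\<^esub> g) \<otimes>\<^bsub>End_ring act\<^esub> h
      = f \<otimes>\<^bsub>End_ring act\<^esub> h \<oplus>\<^bsub>End_ring act\<^esub> g \<otimes>\<^bsub>End_ring act\<^esub> h" for f g h
    by auto
  show "h \<otimes>\<^bsub>End_ring act\<^esub> (f \<oplus>\<^bsub>End_ring act\<^esub> g)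
      = h \<otimes>\<^bsub>End_ring act\<^esub> f \<oplus>\<^bsub>End_ring act\<^esub> h \<otimes>\<^bsub>End_ring act\<^esub> g"
    if "h \<in> carrier (End_ring act)" for f g h
    using that by (auto simp: End_set_def fun_eq_iff)
qed

lemma fully_invariant_common_kernel:
  assumes m: "right_module act" and A: "A \<subseteq> End_set act"
    and comp: "\<And>\<psi> f. \<psi> \<in> A \<Longrightarrow> f \<in> End_set act \<Longrightarrow> \<psi> \<circ> f \<in> A"
  shows "fully_invariant act {x. \<forall>\<psi>\<in>A. \<psi> x = 0}"
proof -
  have add: "\<psi> (x + y) = \<psi> x + \<psi> y" and act: "\<psi> (act x r) = act (\<psi> x) r"
    if "\<psi> \<in> A" for \<psi> x y r
    using that A unfolding End_set_def by auto
  have act_zero: "act 0 r = 0" for r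
    using additive_map_zero[of "\<lambda>x. act x r"] m unfolding right_module_def by blast
  show ?thesis
    unfolding fully_invariant_def submodule_of_def
  proof (intro conjI ballI allI; clarsimp)
    show "\<psi> 0 = 0" if "\<psi> \<in> A" for \<psi>
      using additive_map_zero[OF add[OF that]] .
    show "\<psi> (x + y) = 0" if "\<psi> \<in> A" "\<forall>\<psi>\<in>A. \<psi> x = 0" "\<forall>\<psi>\<in>A. \<psi> y = 0" for \<psi> x y
      using that(2,3)[rule_format, OF that(1)] add[OF that(1)] by simp
    show "\<psi> (- x) = 0" if "\<psi> \<in> A" "\<forall>\<psi>\<in>A. \<psi> x = 0" for \<psi> x
      using that(2)[rule_format, OF that(1)] additive_map_minus[OF add[OF that(1)]] by simp
    show "\<psi> (act x r) = 0" if "\<psi> \<in> A" "\<forall>\<psi>\<in>A. \<psi> x = 0" for \<psi> x r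
      using that(2)[rule_format, OF that(1)] act[OF that(1)] act_zero by simp
    show "\<psi> (f x) = 0" if "f \<in> End_set act" "\<psi> \<in> A" "\<forall>\<psi>\<in>A. \<psi> x = 0" for \<psi> f x
      using that comp[of \<psi> f] by (metis comp_apply)
  qed
qed

lemma centrally_s_unital_left_ann_End_ring:
  assumes m: "right_module act" and aip: "centrally_endo_AIP act"
    and J: "ideal J (End_ring act)"
  shows "centrally_s_unital (End_ring act) (left_ann (End_ring act) J)"
proof -
  interpret J: ideal J "End_ring act" by fact
  define A where "A = left_ann (End_ring act) J"
  have A_iff: "\<psi> \<in> A \<longleftrightarrow> \<psi> \<in> End_set act \<and> (\<forall>b\<in>J. \<forall>x. \<psi> (b x) = 0)" for \<psi>
    unfolding A_def left_ann_def by (auto simp: fun_eq_iff)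
  define N where "N = {x. \<forall>\<psi>\<in>A. \<psi> x = 0}"
  have "fully_invariant act N"
    unfolding N_def
  proof (rule fully_invariant_common_kernel[OF m])
    show "A \<subseteq> End_set act" using A_iff by blast
    fix \<psi> f assume \<psi>: "\<psi> \<in> A" and f: "f \<in> End_set act"
    have "\<psi> ((f \<circ> b) x) = 0" if "b \<in> J" for b x
    proof -
      have "f \<circ> b \<in> J" using J.I_l_closed[OF that] f by simp
      then show ?thesis using \<psi> unfolding A_iff by blast
    qed
    then show "\<psi> \<circ> f \<in> A" using \<psi> f unfolding A_iff by (auto intro: End_set_comp)
  qed
  \<comment> \<open>\<open>N\<close> contains every \<open>b x\<close> with \<open>b \<in> J\<close>, so annihilating \<open>N\<close> and annihilating \<open>J\<close> are equivalent\<close>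
  moreover have "l_ann act N = A"
    unfolding l_ann_def N_def using A_iff by blast
  ultimately show ?thesis
    using aip unfolding centrally_endo_AIP_def A_def by metis
qed

theorem proposition3p6:
  fixes act :: "'m::ab_group_add \<Rightarrow> 'r::ring_1 \<Rightarrow> 'm"
  assumes "right_module act"
    and "centrally_endo_AIP act"
    and "finite_right_uniform_dimension (End_ring act)"
  shows "quasi_Baer (End_ring act)"
proof -
  interpret ring "End_ring act" using assms(1) by (rule ring_End_ring)
  show ?thesis
    using quasi_Baer_if_left_ann_centrally_s_unital
      centrally_s_unital_left_ann_End_ring[OF assms(1,2)] assms(3)
    by blast
qed

end
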